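(* Let $I$ be a finite tree and let $\Sigma$ be a morphism of $R_0(I)$ from an orientation $\Gamma$ to itself which is not the identity. Then every reduced expression for $\Sigma$ contains $\Sigma_i$ for every vertex $i\in I$.
   Context: Let $I$ be a finite tree. $\mathrm{Quiv}(I)$ is the set of orientations of $I$. For $\Gamma\in\mathrm{Quiv}(I)$ and a source or sink $i$ of $\Gamma$, $s_i\Gamma$ is the orientation obtained by reversing all arrows at $i$. The groupoid $R_0(I)$ has object set $\mathrm{Quiv}(I)$ and is generated by elementary isomorphisms $\Sigma_i:\Gamma\to s_i\Gamma$ (for each $\Gamma$ and each source or sink $i$ of $\Gamma$) subject to the relations, whenever both sides are defined: (R1) $\Sigma_i^2=1$; (R2) $\Sigma_i\Sigma_j=\Sigma_j\Sigma_i$ when $i,j$ are not adjacent. An expression for a morphism $\Sigma$ is a composable word $\Sigma_{i_1}\cdots\Sigma_{i_r}$ equal to $\Sigma$; $\ell(\Sigma)$ is the minimal length of an expression, and an expression of length $\ell(\Sigma)$ is called reduced. *)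

theory Defs
  imports Main
begin

definition is_cycle :: "('a \<times> 'a) set \<Rightarrow> 'a list \<Rightarrow> bool" where
  "is_cycle E vs \<longleftrightarrow> length vs \<ge> 3 \<and> distinct vs \<and>
     (\<forall>k < length vs - 1. (vs ! k, vs ! Suc k) \<in> E) \<and> (last vs, hd vs) \<in> E"

definition is_tree :: "'a set \<Rightarrow> ('a \<times> 'a) set \<Rightarrow> bool" where
  "is_tree V E \<longleftrightarrow> finite V \<and> V \<noteq> {} \<and> E \<subseteq> V \<times> V \<and> sym E \<and> irrefl E \<and>
     (\<forall>x\<in>V. \<forall>y\<in>V. (x, y) \<in> E\<^sup>*) \<and> (\<nexists>vs. is_cycle E vs)"

definition is_orientation :: "('a \<times> 'a) set \<Rightarrow> ('a \<times> 'a) set \<Rightarrow> bool" where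
  "is_orientation E \<Gamma> \<longleftrightarrow> \<Gamma> \<subseteq> E \<and> (\<forall>(i, j)\<in>E. (i, j) \<in> \<Gamma> \<or> (j, i) \<in> \<Gamma>) \<and>
     (\<forall>(i, j)\<in>\<Gamma>. (j, i) \<notin> \<Gamma>)"

definition is_source :: "('a \<times> 'a) set \<Rightarrow> 'a \<Rightarrow> bool" where
  "is_source \<Gamma> i \<longleftrightarrow> (\<forall>j. (j, i) \<notin> \<Gamma>)"

definition is_sink :: "('a \<times> 'a) set \<Rightarrow> 'a \<Rightarrow> bool" where
  "is_sink \<Gamma> i \<longleftrightarrow> (\<forall>j. (i, j) \<notin> \<Gamma>)"

definition reflect :: "'a \<Rightarrow> ('a \<times> 'a) set \<Rightarrow> ('a \<times> 'a) set" where
  "reflect i \<Gamma> = {(a, b). (a, b) \<in> \<Gamma> \<and> a \<noteq> i \<and> b \<noteq> i} \<union>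
                  {(b, a) | a b. (a, b) \<in> \<Gamma> \<and> (a = i \<or> b = i)}"

(* A word [i1,...,ir] starting at Gamma: Sigma_{i1} is applied first, then Sigma_{i2}, etc.
   It is composable iff each letter is a source or sink of the current orientation. *)
fun valid_word :: "'a set \<Rightarrow> ('a \<times> 'a) set \<Rightarrow> 'a list \<Rightarrow> bool" where
  "valid_word V \<Gamma> [] = True"
| "valid_word V \<Gamma> (i # w) =
     (i \<in> V \<and> (is_source \<Gamma> i \<or> is_sink \<Gamma> i) \<and> valid_word V (reflect i \<Gamma>) w)"

fun target :: "('a \<times> 'a) set \<Rightarrow> 'a list \<Rightarrow> ('a \<times> 'a) set" where
  "target \<Gamma> [] = \<Gamma>"
| "target \<Gamma> (i # w) = target (reflect i \<Gamma>) w"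

inductive rel_step :: "'a set \<Rightarrow> ('a \<times> 'a) set \<Rightarrow> ('a \<times> 'a) set \<Rightarrow> 'a list \<Rightarrow> 'a list \<Rightarrow> bool"
  for V E \<Gamma> where
  R1_del: "valid_word V \<Gamma> (u @ [i, i] @ v) \<Longrightarrow> valid_word V \<Gamma> (u @ v) \<Longrightarrow>
           rel_step V E \<Gamma> (u @ [i, i] @ v) (u @ v)"
| R1_ins: "valid_word V \<Gamma> (u @ [i, i] @ v) \<Longrightarrow> valid_word V \<Gamma> (u @ v) \<Longrightarrow>
           rel_step V E \<Gamma> (u @ v) (u @ [i, i] @ v)"
| R2: "valid_word V \<Gamma> (u @ [i, j] @ v) \<Longrightarrow> valid_word V \<Gamma> (u @ [j, i] @ v) \<Longrightarrow>
       (i, j) \<notin> E \<Longrightarrow> rel_step V E \<Gamma> (u @ [i, j] @ v) (u @ [j, i] @ v)"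

definition same_morphism :: "'a set \<Rightarrow> ('a \<times> 'a) set \<Rightarrow> ('a \<times> 'a) set \<Rightarrow> 'a list \<Rightarrow> 'a list \<Rightarrow> bool" where
  "same_morphism V E \<Gamma> w w' \<longleftrightarrow> (rel_step V E \<Gamma>)\<^sup>*\<^sup>* w w'"

end

theory Submission
  imports Defs
begin

(* If some vertex does not occur in w, connectedness gives an edge {v, u} with v in w and u not.
   Only the letters v reverse the arrow between v and u, and w returns to the initial orientation,
   so v occurs twice; at two consecutive occurrences of v that arrow has been reversed once, hence
   v is a sink at one of them and a source at the other. Between two consecutive occurrences of a
   vertex v with this change of type, any neighbour j of v occurring in between must occur there
   twice (otherwise the arrow between v and j is reversed exactly twice and v cannot change type),
   and its first two occurrences again change type. Descending, we reach two consecutive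
   occurrences of a vertex separated only by non-neighbours: (R2) brings them together and (R1)
   cancels them, so w was not reduced. *)

lemma mem_reflect:
  "(a, b) \<in> reflect i G \<longleftrightarrow>
     (a \<noteq> i \<and> b \<noteq> i \<and> (a, b) \<in> G) \<or> ((a = i \<or> b = i) \<and> (b, a) \<in> G)"
  unfolding reflect_def by blast

lemma reflect_reflect [simp]: "reflect i (reflect i G) = G"
  by (auto simp: mem_reflect)

lemma is_source_reflect_self [simp]: "is_source (reflect i G) i \<longleftrightarrow> is_sink G i"
  and is_sink_reflect_self [simp]: "is_sink (reflect i G) i \<longleftrightarrow> is_source G i"
  unfolding is_source_def is_sink_def by (auto simp: mem_reflect)

lemma is_orientation_reflect:
  assumes "sym E" "is_orientation E G"
  shows "is_orientation E (reflect i G)"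
  using assms unfolding is_orientation_def sym_def by (auto simp: mem_reflect; blast)

lemma is_orientation_target:
  "sym E \<Longrightarrow> is_orientation E G \<Longrightarrow> is_orientation E (target G u)"
  by (induction u arbitrary: G) (auto simp: is_orientation_reflect)

lemma is_orientation_mem_swap:
  "is_orientation E G \<Longrightarrow> (a, b) \<in> E \<Longrightarrow> (b, a) \<in> G \<longleftrightarrow> (a, b) \<notin> G"
  unfolding is_orientation_def by blast

lemma target_append [simp]: "target G (u @ v) = target (target G u) v"
  by (induction u arbitrary: G) auto

lemma valid_word_append [simp]:
  "valid_word V G (u @ v) \<longleftrightarrow> valid_word V G u \<and> valid_word V (target G u) v"
  by (induction u arbitrary: G) auto

lemma set_subset_if_valid_word: "valid_word V G u \<Longrightarrow> set u \<subseteq> V"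
  by (induction u arbitrary: G) auto

lemma mem_target_if_not_in_word:
  "a \<notin> set u \<Longrightarrow> b \<notin> set u \<Longrightarrow> (a, b) \<in> target G u \<longleftrightarrow> (a, b) \<in> G"
  by (induction u arbitrary: G) (auto simp: mem_reflect)

lemma commute_nonadjacent:
  assumes "x \<noteq> v" "(x, v) \<notin> G" "(v, x) \<notin> G"
  shows "target G [x, v] = target G [v, x]"
    and "valid_word V G [x, v] \<longleftrightarrow> valid_word V G [v, x]"
  using assms by (auto simp: mem_reflect is_source_def is_sink_def)

lemma valid_word_swap_nonadjacent:
  assumes "sym E" "is_orientation E G" "valid_word V G (p @ [x, v] @ s)"
    and "x \<noteq> v" "(x, v) \<notin> E" "(v, x) \<notin> E"
  shows "valid_word V G (p @ [v, x] @ s)"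
proof -
  have "is_orientation E (target G p)"
    using assms(1,2) by (rule is_orientation_target)
  then have "(x, v) \<notin> target G p" "(v, x) \<notin> target G p"
    using assms(5,6) unfolding is_orientation_def by auto
  note commute = commute_nonadjacent[OF assms(4) this]
  show ?thesis
    using assms(3) commute(2)[of V] unfolding valid_word_append target_append commute(1)
    by simp
qed

lemma rel_steps_move_left:
  assumes "sym E" "is_orientation E G" "valid_word V G (p @ m @ [v] @ s)"
    and "\<forall>a\<in>set m. a \<noteq> v \<and> (v, a) \<notin> E"
  shows "(rel_step V E G)\<^sup>*\<^sup>* (p @ m @ [v] @ s) (p @ [v] @ m @ s)"
  using assms(3,4)
proof (induction m arbitrary: s rule: rev_induct)
  case Nil
  then show ?case by simp
next
  case (snoc x m)
  have x: "x \<noteq> v" "(v, x) \<notin> E" "(x, v) \<notin> E"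
    using snoc.prems(2) \<open>sym E\<close> by (auto dest: symD)
  have valid_xv: "valid_word V G ((p @ m) @ [x, v] @ s)"
    using snoc.prems(1) by simp
  have valid_vx: "valid_word V G ((p @ m) @ [v, x] @ s)"
    using valid_word_swap_nonadjacent[OF assms(1,2) valid_xv x(1,3,2)] .
  have "rel_step V E G ((p @ m) @ [x, v] @ s) ((p @ m) @ [v, x] @ s)"
    using valid_xv valid_vx x(3) by (rule rel_step.R2)
  moreover have "(rel_step V E G)\<^sup>*\<^sup>* (p @ m @ [v] @ x # s) (p @ [v] @ m @ x # s)"
    using snoc.IH[of "x # s"] snoc.prems(2) valid_vx by simp
  ultimately show ?case
    by (simp add: converse_rtranclp_into_rtranclp)
qed

lemma valid_word_if_rel_steps:
  "(rel_step V E G)\<^sup>*\<^sup>* w w' \<Longrightarrow> valid_word V G w \<Longrightarrow> valid_word V G w'"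
  by (induction rule: rtranclp_induct) (auto elim: rel_step.cases)

lemma rel_steps_cancel_nonadjacent:
  assumes "sym E" "is_orientation E G" "valid_word V G (p @ [v] @ m @ [v] @ s)"
    and "\<forall>a\<in>set m. a \<noteq> v \<and> (v, a) \<notin> E"
  shows "(rel_step V E G)\<^sup>*\<^sup>* (p @ [v] @ m @ [v] @ s) (p @ m @ s)"
proof -
  have moved: "(rel_step V E G)\<^sup>*\<^sup>* (p @ [v] @ m @ [v] @ s) (p @ [v, v] @ m @ s)"
    using rel_steps_move_left[OF assms(1,2) _ assms(4), of V "p @ [v]" s] assms(3) by simp
  then have "valid_word V G (p @ [v, v] @ m @ s)"
    using assms(3) by (rule valid_word_if_rel_steps)
  moreover from this have "valid_word V G (p @ m @ s)"
    by simp
  ultimately have "rel_step V E G (p @ [v, v] @ m @ s) (p @ m @ s)"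
    by (rule rel_step.R1_del)
  with moved show ?thesis
    by (rule rtranclp.rtrancl_into_rtrancl)
qed

definition flips_type :: "'a \<Rightarrow> ('a \<times> 'a) set \<Rightarrow> ('a \<times> 'a) set \<Rightarrow> bool" where
  "flips_type v G G' \<longleftrightarrow> (is_sink G v \<and> is_source G' v) \<or> (is_source G v \<and> is_sink G' v)"

lemma flips_type_if_edge_reversed:
  assumes "is_orientation E G" "is_orientation E G'" "(v, u) \<in> E"
    and "(v, u) \<in> G' \<longleftrightarrow> (u, v) \<in> G"
    and "is_source G v \<or> is_sink G v" "is_source G' v \<or> is_sink G' v"
  shows "flips_type v G G'"
  using assms is_orientation_mem_swap[OF assms(1,3)] is_orientation_mem_swap[OF assms(2,3)]
  unfolding flips_type_def is_source_def is_sink_def by blast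

lemma not_flips_type_if_edge_kept:
  assumes "is_orientation E G" "is_orientation E G'" "(v, u) \<in> E"
    and "(v, u) \<in> G' \<longleftrightarrow> (v, u) \<in> G"
  shows "\<not> flips_type v G G'"
  using assms is_orientation_mem_swap[OF assms(1,3)] is_orientation_mem_swap[OF assms(2,3)]
  unfolding flips_type_def is_source_def is_sink_def by blast

lemma nonadjacent_return_if_flips_type:
  assumes "sym E" "is_orientation E G" "valid_word V G (v # m @ [v])" "v \<notin> set m"
    and "flips_type v G (target G (v # m))"
  shows "\<exists>x u y z. v # m @ [v] = x @ [u] @ y @ [u] @ z \<and>
           (\<forall>a\<in>set y. a \<noteq> u \<and> (u, a) \<notin> E)"
  using assms(2-)
proof (induction "length m" arbitrary: G v m rule: less_induct)
  case less
  show ?case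
  proof (cases "\<exists>j\<in>set m. (v, j) \<in> E")
    case False
    then have "v # m @ [v] = [] @ [v] @ m @ [v] @ [] \<and> (\<forall>a\<in>set m. a \<noteq> v \<and> (v, a) \<notin> E)"
      using less.prems(3) by auto
    then show ?thesis by blast
  next
    case True
    then obtain j where j: "j \<in> set m" "(v, j) \<in> E" by blast
    obtain m1 m2 where m: "m = m1 @ j # m2" "j \<notin> set m1"
      using split_list_first[OF j(1)] by blast
    have "j \<in> set m2"
    proof (rule ccontr)
      assume "j \<notin> set m2"
      then have "(v, j) \<in> target G (v # m) \<longleftrightarrow> (v, j) \<in> G"
        using m less.prems(3) by (simp add: mem_target_if_not_in_word mem_reflect)
      then show False
        using not_flips_type_if_edge_kept[OF less.prems(1) _ j(2)] less.prems(4)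
          is_orientation_target[OF assms(1) less.prems(1)] by blast
    qed
    then obtain m21 m22 where m2: "m2 = m21 @ j # m22" "j \<notin> set m21"
      by (blast dest: split_list_first)
    define H where "H = target G (v # m1)"
    have orient_H: "is_orientation E H"
      unfolding H_def using assms(1) less.prems(1) by (rule is_orientation_target)
    have valid_H: "valid_word V H (j # m21 @ [j])"
      using less.prems(2) unfolding H_def m m2 by simp
    have "flips_type j H (target H (j # m21))"
    proof (rule flips_type_if_edge_reversed)
      show "is_orientation E H" "is_orientation E (target H (j # m21))"
        using orient_H is_orientation_target[OF assms(1) orient_H] .
      show "(j, v) \<in> E" using assms(1) j(2) by (rule symD)
      show "(j, v) \<in> target H (j # m21) \<longleftrightarrow> (v, j) \<in> H"
        using m m2 less.prems(3) by (simp add: mem_target_if_not_in_word mem_reflect)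
      show "is_source H j \<or> is_sink H j"
        and "is_source (target H (j # m21)) j \<or> is_sink (target H (j # m21)) j"
        using valid_H by auto
    qed
    moreover have "length m21 < length m" "j \<notin> set m21"
      using m m2 by auto
    ultimately obtain x u y z where
      "j # m21 @ [j] = x @ [u] @ y @ [u] @ z" "\<forall>a\<in>set y. a \<noteq> u \<and> (u, a) \<notin> E"
      using less.hyps[OF _ orient_H valid_H] by blast
    then have "v # m @ [v] = (v # m1 @ x) @ [u] @ y @ [u] @ (z @ m22 @ [v])
        \<and> (\<forall>a\<in>set y. a \<noteq> u \<and> (u, a) \<notin> E)"
      using m m2 by simp
    then show ?thesis by blast
  qed
qed

lemma flipping_return_if_edge_leaves_word:
  assumes "sym E" "is_orientation E G" "valid_word V G w" "target G w = G"
    and "(v, u) \<in> E" "v \<in> set w" "u \<notin> set w"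
  shows "\<exists>p m s. w = p @ [v] @ m @ [v] @ s \<and> v \<notin> set m \<and>
           flips_type v (target G p) (target (target G p) (v # m))"
proof -
  obtain p r where w: "w = p @ v # r" "v \<notin> set p"
    using split_list_first[OF assms(6)] by blast
  have "v \<in> set r"
  proof (rule ccontr)
    assume "v \<notin> set r"
    then have "(v, u) \<in> target G w \<longleftrightarrow> (u, v) \<in> G"
      using w assms(7) by (simp add: mem_target_if_not_in_word mem_reflect)
    then show False
      using assms(4) is_orientation_mem_swap[OF assms(2,5)] by simp
  qed
  then obtain m s where r: "r = m @ v # s" "v \<notin> set m"
    by (blast dest: split_list_first)
  define H where "H = target G p"
  have orient_H: "is_orientation E H"
    unfolding H_def using assms(1,2) by (rule is_orientation_target)
  have valid_H: "valid_word V H (v # m @ [v])"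
    using assms(3) unfolding H_def w r by simp
  have "flips_type v H (target H (v # m))"
  proof (rule flips_type_if_edge_reversed)
    show "is_orientation E H" "is_orientation E (target H (v # m))" "(v, u) \<in> E"
      using orient_H is_orientation_target[OF assms(1) orient_H] assms(5) .
    show "(v, u) \<in> target H (v # m) \<longleftrightarrow> (u, v) \<in> H"
      using w r assms(7) by (simp add: mem_target_if_not_in_word mem_reflect)
    show "is_source H v \<or> is_sink H v"
      and "is_source (target H (v # m)) v \<or> is_sink (target H (v # m)) v"
      using valid_H by auto
  qed
  then show ?thesis
    using w r unfolding H_def by auto
qed

lemma rtrancl_edge_leaving_set:
  "(x, y) \<in> R\<^sup>* \<Longrightarrow> x \<in> S \<Longrightarrow> y \<notin> S \<Longrightarrow> \<exists>a b. (a, b) \<in> R \<and> a \<in> S \<and> b \<notin> S"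
  by (induction rule: rtrancl_induct) auto

theorem mainTheorem18:
  fixes V :: "'a set" and E :: "('a \<times> 'a) set" and \<Gamma> :: "('a \<times> 'a) set" and w :: "'a list"
  assumes "is_tree V E"
    and "is_orientation E \<Gamma>"
    and "valid_word V \<Gamma> w"
    and "target \<Gamma> w = \<Gamma>"
    and "\<not> same_morphism V E \<Gamma> w []"
    and "\<forall>w'. same_morphism V E \<Gamma> w w' \<longrightarrow> length w \<le> length w'"
  shows "\<forall>i\<in>V. i \<in> set w"
proof (rule ccontr)
  assume "\<not> (\<forall>i\<in>V. i \<in> set w)"
  then obtain k where k: "k \<in> V" "k \<notin> set w" by blast
  have sym: "sym E" and connected: "\<forall>x\<in>V. \<forall>y\<in>V. (x, y) \<in> E\<^sup>*"
    using assms(1) unfolding is_tree_def by auto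
  obtain i where i: "i \<in> set w"
    using assms(5) unfolding same_morphism_def by (cases w) auto
  then have "i \<in> V"
    using set_subset_if_valid_word[OF assms(3)] by blast
  then obtain v u where vu: "(v, u) \<in> E" "v \<in> set w" "u \<notin> set w"
    using rtrancl_edge_leaving_set[of i k E "set w"] connected k i by blast
  obtain p m s where w: "w = p @ [v] @ m @ [v] @ s" "v \<notin> set m"
    and flips: "flips_type v (target \<Gamma> p) (target (target \<Gamma> p) (v # m))"
    using flipping_return_if_edge_leaves_word[OF sym assms(2-4) vu] by blast
  have "valid_word V (target \<Gamma> p) (v # m @ [v])"
    using assms(3) unfolding w by simp
  then obtain x u y z where "v # m @ [v] = x @ [u] @ y @ [u] @ z"
    and y: "\<forall>a\<in>set y. a \<noteq> u \<and> (u, a) \<notin> E"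
    using nonadjacent_return_if_flips_type[OF sym is_orientation_target[OF sym assms(2)] _ w(2)]
      flips by blast
  then have w': "w = (p @ x) @ [u] @ y @ [u] @ (z @ s)"
    unfolding w by simp
  have "same_morphism V E \<Gamma> w ((p @ x) @ y @ (z @ s))"
    unfolding same_morphism_def w' using assms(3) w' y
    by (intro rel_steps_cancel_nonadjacent[OF sym assms(2)]) auto
  with assms(6) w' show False by fastforce
qed

end
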